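(* Denote by $P_{\beta,\infty}$ the minimizer of $\mathcal{E}_{\beta,\infty}(P) = \operatorname{tr}(HP) + \frac{1}{\beta}\operatorname{tr}\{P\ln P + (1-P)\ln(1-P)\}$ and by $P_{\beta,\eta}$ the minimizer of $\mathcal{E}_{\beta,\infty}(P) + \frac{1}{\eta}\|P\|_1$, both subject to $\operatorname{tr} P = N$, $P = P^{\mathrm{T}}$, $0\preceq P\preceq I$. Then $$0 \le \mathcal{E}_{\beta,\infty}(P_{\beta,\eta}) - \mathcal{E}_{\beta,\infty}(P_{\beta,\infty}) \le \frac{1}{\eta}\|P_{\beta,\infty}\|_1,$$ and $$\operatorname{tr}\Bigl(\max\bigl(\beta^{-1}, |H-\mu|\bigr)(P_{\beta,\eta} - P_{\beta,\infty})^2\Bigr) \le \frac{1}{\eta}\|P_{\beta,\infty}\|_1.$$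
   Context: $H$ is an $n\times n$ real symmetric matrix with eigenpairs $\{\lambda_i,\phi_i\}$; $N$ is a positive integer; $\beta>0$ is the inverse temperature and $\eta>0$ the $\ell_1$ penalty parameter. $\|P\|_1=\sum_{i,j}|p_{ij}|$ is the entrywise $\ell_1$ norm and $A\preceq B$ means $B-A$ is positive semidefinite. The minimizer of the unregularized problem is $P_{\beta,\infty} = [1+\exp(\beta(H-\mu))]^{-1}$, where the chemical potential $\mu$ is determined by $\sum_{i=1}^n (1+\exp(\beta(\lambda_i-\mu)))^{-1} = N$. Both problems are strictly convex so minimizers exist and are unique. $|H-\mu|$ and $\max(\beta^{-1},|H-\mu|)$ are matrix functions defined via the spectral decomposition of $H$. *)

theory Defs
  imports "HOL-Analysis.Analysis"
begin

definition diagm :: "real^'n \<Rightarrow> real^'n^'n" where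
  "diagm d = (\<chi> i j. if i = j then d $ i else 0)"

definition matfun :: "(real \<Rightarrow> real) \<Rightarrow> real^'n^'n \<Rightarrow> real^'n^'n" where
  "matfun f A = (SOME B. \<exists>U d. orthogonal_matrix U \<and>
      A = U ** diagm d ** transpose U \<and> B = U ** diagm (\<chi> i. f (d $ i)) ** transpose U)"

definition psd :: "real^'n^'n \<Rightarrow> bool" where
  "psd A \<longleftrightarrow> (\<forall>x. 0 \<le> x \<bullet> (A *v x))"

definition l1norm :: "real^'n^'n \<Rightarrow> real" where
  "l1norm P = (\<Sum>i\<in>UNIV. \<Sum>j\<in>UNIV. \<bar>P $ i $ j\<bar>)"

text \<open>Binary entropy-type function x ln x + (1-x) ln (1-x) (with 0 ln 0 = 0).\<close>
definition ent :: "real \<Rightarrow> real" where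
  "ent x = x * ln x + (1 - x) * ln (1 - x)"

definition feasible :: "nat \<Rightarrow> real^'n^'n \<Rightarrow> bool" where
  "feasible N P \<longleftrightarrow> trace P = real N \<and> transpose P = P \<and> psd P \<and> psd (mat 1 - P)"

definition energy :: "real \<Rightarrow> real^'n^'n \<Rightarrow> real^'n^'n \<Rightarrow> real" where
  "energy \<beta> H P = trace (H ** P) + (1 / \<beta>) * trace (matfun ent P)"

definition is_minimizer :: "(real^'n^'n \<Rightarrow> real) \<Rightarrow> nat \<Rightarrow> real^'n^'n \<Rightarrow> bool" where
  "is_minimizer F N P \<longleftrightarrow> feasible N P \<and> (\<forall>Q. feasible N Q \<longrightarrow> F P \<le> F Q)"

definition fermi :: "real \<Rightarrow> real \<Rightarrow> real \<Rightarrow> real" where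
  "fermi \<beta> \<mu> x = 1 / (1 + exp (\<beta> * (x - \<mu>)))"

end

theory Submission
  imports Defs
begin

text \<open>Diagonalise \<open>H = \<Sum>\<^sub>i d\<^sub>i u\<^sub>i u\<^sub>i\<^sup>T\<close> and a feasible \<open>P = \<Sum>\<^sub>j q\<^sub>j v\<^sub>j v\<^sub>j\<^sup>T\<close>, and let
  \<open>F = f(H)\<close> with \<open>f\<close> the Fermi-Dirac function. The overlaps \<open>c\<^sub>i\<^sub>j = (v\<^sub>j \<bullet> u\<^sub>i)\<^sup>2\<close> form a doubly
  stochastic matrix, so \<open>E(P) - E(F)\<close> is the \<open>c\<close>-average of the scalar gaps
  \<open>(d\<^sub>i - \<mu>)(q\<^sub>j - p\<^sub>i) + (ent q\<^sub>j - ent p\<^sub>i) / \<beta>\<close> with \<open>p\<^sub>i = f(d\<^sub>i)\<close>, the \<open>\<mu>\<close>-terms cancelling since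
  \<open>tr P = tr F = N\<close>. Each scalar gap is \<open>1/\<beta>\<close> times a binary relative entropy and dominates
  \<open>max (1/\<beta>) \<bar>d\<^sub>i - \<mu>\<bar> (q\<^sub>j - p\<^sub>i)\<^sup>2\<close>, and averaging these bounds gives
  \<open>tr (max (1/\<beta>, \<bar>H - \<mu>\<bar>) (P - F)\<^sup>2) \<le> E(P) - E(F)\<close>. Hence \<open>F\<close> is the unique minimiser of \<open>E\<close>,
  and the claims follow by testing the minimality of the regularised minimiser against \<open>F\<close>.\<close>

section \<open>Inequalities for hyperbolic functions and the binary entropy\<close>

lemma tanh_real_le_self:
  assumes "0 \<le> x"
  shows "tanh x \<le> (x::real)"
proof -
  have "(\<lambda>x. x - tanh x) 0 \<le> (\<lambda>x. x - tanh x) x"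
  proof (rule deriv_nonneg_imp_mono[of 0 x _ "\<lambda>x. tanh x ^ 2"])
    show "((\<lambda>x. x - tanh x) has_real_derivative tanh y ^ 2) (at y)" for y :: real
      by (auto intro!: derivative_eq_intros)
  qed (use assms in auto)
  then show ?thesis by simp
qed

lemma sinh_real_ge_self:
  assumes "0 \<le> x"
  shows "x \<le> sinh (x::real)"
proof -
  have "(\<lambda>x. sinh x - x) 0 \<le> (\<lambda>x. sinh x - x) x"
  proof (rule deriv_nonneg_imp_mono[of 0 x _ "\<lambda>x. cosh x - 1"])
    show "((\<lambda>x. sinh x - x) has_real_derivative cosh y - 1) (at y)" for y :: real
      by (auto intro!: derivative_eq_intros)
    show "0 \<le> cosh y - 1" for y :: real
      using cosh_real_ge_1[of y] by simp
  qed (use assms in auto)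
  then show ?thesis by simp
qed

lemma tanh_div_self_antimono:
  assumes "0 < x" "x \<le> y"
  shows "tanh y / y \<le> tanh x / (x::real)"
proof (rule deriv_nonpos_imp_antimono[of x y _ "\<lambda>z. ((1 - tanh z ^ 2) * z - tanh z) / z ^ 2"])
  fix z :: real
  assume "z \<in> {x..y}"
  then have "0 < z" using assms by auto
  show "((\<lambda>z. tanh z / z) has_real_derivative ((1 - tanh z ^ 2) * z - tanh z) / z ^ 2) (at z)"
    using \<open>0 < z\<close> by (auto intro!: derivative_eq_intros simp: field_simps power2_eq_square)
  have "1 - tanh z ^ 2 = 1 / cosh z ^ 2"
    by (simp add: tanh_def power_divide field_simps) (simp add: cosh_square_eq)
  moreover have "z \<le> sinh z * cosh z"
    using sinh_real_ge_self[of "2 * z"] \<open>0 < z\<close> by (simp add: sinh_double)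
  ultimately have "(1 - tanh z ^ 2) * z \<le> sinh z * cosh z / cosh z ^ 2"
    by (simp add: divide_right_mono)
  also have "\<dots> = tanh z"
    by (simp add: tanh_def power2_eq_square)
  finally show "((1 - tanh z ^ 2) * z - tanh z) / z ^ 2 \<le> 0"
    by (simp add: divide_nonpos_nonneg)
qed (use assms in auto)

lemma ln_cosh_le_half_square: "ln (cosh w) \<le> (w::real)\<^sup>2 / 2"
proof -
  have "(\<lambda>x. x\<^sup>2 / 2 - ln (cosh x)) 0 \<le> (\<lambda>x. x\<^sup>2 / 2 - ln (cosh x)) \<bar>w\<bar>"
  proof (rule deriv_nonneg_imp_mono[of 0 "\<bar>w\<bar>" _ "\<lambda>x. x - tanh x"])
    show "((\<lambda>x. x\<^sup>2 / 2 - ln (cosh x)) has_real_derivative x - tanh x) (at x)" for x :: real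
      by (auto intro!: derivative_eq_intros simp: tanh_def)
    show "x \<in> {0..\<bar>w\<bar>} \<Longrightarrow> 0 \<le> x - tanh x" for x
      using tanh_real_le_self[of x] by auto
  qed auto
  then show ?thesis by simp
qed

text \<open>The tangent-line bound for the concave function \<open>u \<mapsto> ln (cosh (sqrt u))\<close> at \<open>u = a\<^sup>2\<close>.\<close>

lemma ln_cosh_le_quadratic_nonneg:
  assumes "0 < a" "0 \<le> w"
  shows "ln (cosh w :: real) \<le> ln (cosh a) + tanh a / (2 * a) * (w\<^sup>2 - a\<^sup>2)"
proof -
  define \<phi> where "\<phi> x = ln (cosh a) + tanh a / (2 * a) * (x\<^sup>2 - a\<^sup>2) - ln (cosh x)" for x :: real
  have deriv: "(\<phi> has_real_derivative tanh a / a * x - tanh x) (at x)" for x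
    using assms unfolding \<phi>_def by (auto intro!: derivative_eq_intros simp: tanh_def)
  have slope: "tanh a / a * x \<le> tanh x \<longleftrightarrow> tanh a / a \<le> tanh x / x" if "0 < x" for x
    using that by (simp add: pos_le_divide_eq)
  have "\<phi> a \<le> \<phi> w"
  proof (cases "w \<le> a")
    case True
    show ?thesis
    proof (rule deriv_nonpos_imp_antimono[OF _ _ True])
      fix x assume x: "x \<in> {w..a}"
      show "tanh a / a * x - tanh x \<le> 0"
        using x assms slope[of x] tanh_div_self_antimono[of x a] by (cases "x = 0") auto
    qed (use deriv in auto)
  next
    case False
    show ?thesis
    proof (rule deriv_nonneg_imp_mono[of a w])
      fix x assume x: "x \<in> {a..w}"
      show "0 \<le> tanh a / a * x - tanh x"
        using x assms tanh_div_self_antimono[of a x] by (simp add: field_simps)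
    qed (use deriv False in auto)
  qed
  then show ?thesis
    by (simp add: \<phi>_def)
qed

lemma ln_cosh_le_quadratic:
  assumes "a \<noteq> 0"
  shows "ln (cosh w) \<le> ln (cosh a) + tanh a / (2 * a) * (w\<^sup>2 - (a::real)\<^sup>2)"
proof -
  have "tanh \<bar>x\<bar> / (2 * \<bar>x\<bar>) = tanh x / (2 * x)" for x :: real
    by (cases "0 \<le> x"; simp)+
  then show ?thesis
    using ln_cosh_le_quadratic_nonneg[of "\<bar>a\<bar>" "\<bar>w\<bar>"] assms by simp
qed

lemma ln_cosh_diff_le:
  fixes a h :: real
  shows "ln (cosh (a - h)) - ln (cosh a) \<le> - h * tanh a + h\<^sup>2 / max 1 (2 * \<bar>a\<bar>)"
proof (cases "a = 0")
  case True
  have "0 \<le> ln (cosh h)"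
    using cosh_real_ge_1[of h] by simp
  then have "ln (cosh h) \<le> h\<^sup>2"
    using ln_cosh_le_half_square[of h] by linarith
  then show ?thesis
    using True by simp
next
  case False
  define k where "k = tanh a / (2 * a)"
  have "k * (2 * \<bar>a\<bar>) = tanh \<bar>a\<bar>"
    using False by (cases "0 \<le> a") (auto simp: k_def)
  moreover have "k = tanh \<bar>a\<bar> / (2 * \<bar>a\<bar>)"
    by (cases "0 \<le> a") (auto simp: k_def)
  ultimately have "k * (2 * \<bar>a\<bar>) \<le> 1" "k \<le> 1 / 2" "0 \<le> k"
    using tanh_real_lt_1[of "\<bar>a\<bar>"] tanh_real_le_self[of "\<bar>a\<bar>"] False
    by (auto simp: divide_le_eq)
  then have k: "0 \<le> k" "k \<le> 1 / max 1 (2 * \<bar>a\<bar>)"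
    by (auto simp: max_def field_simps)
  have "ln (cosh (a - h)) - ln (cosh a) \<le> k * ((a - h)\<^sup>2 - a\<^sup>2)"
    using ln_cosh_le_quadratic[OF False, of "a - h"] by (simp add: k_def)
  also have "\<dots> = - h * tanh a + k * h\<^sup>2"
    using False by (simp add: k_def power2_eq_square field_simps)
  also have "\<dots> \<le> - h * tanh a + h\<^sup>2 / max 1 (2 * \<bar>a\<bar>)"
    using mult_right_mono[OF k(2) zero_le_power2[of h]] by simp
  finally show ?thesis .
qed

text \<open>The left-hand side is the logarithmic moment generating function of a Bernoulli variable
  with success probability \<open>1 / (1 + exp t)\<close>.\<close>

lemma bernoulli_log_mgf_le:
  fixes s t :: real
  shows "ln (exp t + exp s) - ln (1 + exp t) \<le> s / (1 + exp t) + s\<^sup>2 / (4 * max 1 \<bar>t\<bar>)"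
proof -
  have ln_exp_add: "ln (exp x + exp y) = ln 2 + (x + y) / 2 + ln (cosh ((x - y) / 2))" for x y :: real
  proof -
    have "exp x + exp y = 2 * exp ((x + y) / 2) * cosh ((x - y) / 2)"
      by (simp add: cosh_def field_simps exp_add[symmetric])
    then show ?thesis
      by (simp add: ln_mult)
  qed
  have "exp t + exp t * exp t \<noteq> 0" "1 + exp t \<noteq> 0"
    by (simp_all add: add_pos_pos order.strict_implies_not_eq[symmetric])
  then have tanh_half: "tanh (t / 2) = 1 - 2 / (1 + exp t)"
    by (simp add: tanh_real_altdef exp_minus field_simps)
  have "ln (exp t + exp s) - ln (1 + exp t) = s / 2 + (ln (cosh (t / 2 - s / 2)) - ln (cosh (t / 2)))"
    using ln_exp_add[of t s] ln_exp_add[of t 0] by (simp add: field_simps)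
  also have "\<dots> \<le> s / 2 + (- (s / 2) * tanh (t / 2) + (s / 2)\<^sup>2 / max 1 \<bar>t\<bar>)"
    using ln_cosh_diff_le[of "t / 2" "s / 2"] by simp
  also have "\<dots> = s / (1 + exp t) + s\<^sup>2 / (4 * max 1 \<bar>t\<bar>)"
    unfolding tanh_half by (simp add: field_simps power2_eq_square)
  finally show ?thesis .
qed

lemma binary_gibbs_inequality:
  fixes q r :: real
  assumes "0 \<le> q" "q \<le> 1" "0 < r" "r < 1"
  shows "q * ln r + (1 - q) * ln (1 - r) \<le> ent q"
proof -
  have "x * ln y \<le> x * ln x + (y - x)" if "0 \<le> x" "0 < y" for x y :: real
  proof (cases "x = 0")
    case False
    then have "x * ln (y / x) \<le> x * (y / x - 1)"
      using that ln_le_minus_one[of "y / x"] by (intro mult_left_mono) auto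
    then show ?thesis
      using False that by (simp add: ln_div right_diff_distrib)
  qed (use that in simp)
  from this[of q r] this[of "1 - q" "1 - r"] show ?thesis
    using assms by (simp add: ent_def)
qed

text \<open>Strong convexity of the binary entropy at a Fermi occupation \<open>p\<close>: the right-hand side is
  the relative entropy of \<open>q\<close> with respect to \<open>p\<close>, because \<open>ent' p = - t\<close>. By the Gibbs
  variational principle it dominates \<open>s q - ln (1 - p + p exp s)\<close> for every \<open>s\<close>, and the choice
  \<open>s = 2 max 1 \<bar>t\<bar> (q - p)\<close> together with \<open>bernoulli_log_mgf_le\<close> gives the bound.\<close>

lemma binary_relative_entropy_ge_square:
  fixes q t :: real
  assumes "0 \<le> q" "q \<le> 1"
  defines "p \<equiv> 1 / (1 + exp t)"
  shows "max 1 \<bar>t\<bar> * (q - p)\<^sup>2 \<le> t * (q - p) + (ent q - ent p)"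
proof -
  define c where "c = max 1 \<bar>t\<bar>"
  define s where "s = 2 * c * (q - p)"
  define u where "u = s - t"
  have pos: "0 < 1 + exp t" "0 < 1 + exp u" "0 < c"
    by (simp_all add: add_pos_pos c_def)
  have "q * ln (exp u / (1 + exp u)) + (1 - q) * ln (1 - exp u / (1 + exp u)) \<le> ent q"
    using pos by (intro binary_gibbs_inequality assms) auto
  then have gibbs: "q * u - ln (1 + exp u) \<le> ent q"
    using pos by (simp add: ln_div field_simps)
  have "ln (1 + exp u) = ln (exp t + exp s) - t"
    using pos by (simp add: u_def exp_diff ln_div field_simps)
  moreover have ln_p: "ln p = - ln (1 + exp t)" and ln_1p: "ln (1 - p) = t - ln (1 + exp t)"
    using pos by (simp_all add: p_def ln_div field_simps)
  then have "ent p = (1 - p) * t - ln (1 + exp t)"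
    unfolding ent_def ln_p ln_1p by (simp add: algebra_simps)
  moreover have "ln (exp t + exp s) - ln (1 + exp t) \<le> s * p + s\<^sup>2 / (4 * c)"
    using bernoulli_log_mgf_le[of t s] by (simp add: c_def p_def)
  ultimately have "q * s - (s * p + s\<^sup>2 / (4 * c)) \<le> t * (q - p) + (ent q - ent p)"
    using gibbs by (simp add: u_def algebra_simps)
  also have "q * s - (s * p + s\<^sup>2 / (4 * c)) = c * (q - p)\<^sup>2"
    using pos by (simp add: s_def field_simps power2_eq_square)
  finally show ?thesis
    by (simp add: c_def)
qed

lemma fermi_free_energy_gap_ge:
  fixes \<beta> \<mu> q x :: real
  assumes "0 < \<beta>" "0 \<le> q" "q \<le> 1"
  defines "p \<equiv> fermi \<beta> \<mu> x"
  shows "max (1 / \<beta>) \<bar>x - \<mu>\<bar> * (q - p)\<^sup>2 \<le> (x - \<mu>) * (q - p) + (1 / \<beta>) * (ent q - ent p)"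
proof -
  have "max 1 \<bar>\<beta> * (x - \<mu>)\<bar> * (q - p)\<^sup>2 \<le> \<beta> * (x - \<mu>) * (q - p) + (ent q - ent p)"
    using binary_relative_entropy_ge_square[OF assms(2,3), of "\<beta> * (x - \<mu>)"]
    by (simp add: p_def fermi_def)
  moreover have "max 1 \<bar>\<beta> * (x - \<mu>)\<bar> = \<beta> * max (1 / \<beta>) \<bar>x - \<mu>\<bar>"
    using assms(1) by (simp add: max_mult_distrib_left abs_mult)
  ultimately show ?thesis
    using assms(1) by (simp add: field_simps)
qed

section \<open>Spectral calculus for real symmetric matrices\<close>

lemma orthogonal_matrix_column_inner:
  fixes U :: "real^'n^'n"
  assumes "orthogonal_matrix U"
  shows "column i U \<bullet> column j U = (if i = j then 1 else 0)"
proof -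
  have "(transpose U ** U) $ i $ j = mat 1 $ i $ j"
    using assms by (simp add: orthogonal_matrix_def)
  then show ?thesis
    by (simp add: matrix_mult_transpose_dot_column mat_def)
qed

lemma inner_column_sum:
  fixes U :: "real^'n^'n"
  assumes "orthogonal_matrix U"
  shows "column j U \<bullet> (\<Sum>i\<in>UNIV. a i *\<^sub>R column i U) = a j"
  using assms by (simp add: inner_sum_right orthogonal_matrix_column_inner if_distrib cong: if_cong)

lemma diag_conj_mult_vector:
  fixes U :: "real^'n^'n"
  shows "(U ** diagm d ** transpose U) *v x = (\<Sum>i\<in>UNIV. (d $ i * (column i U \<bullet> x)) *\<^sub>R column i U)"
proof -
  have "((U ** diagm d ** transpose U) *v x) $ r = (\<Sum>m\<in>UNIV. (\<Sum>k\<in>UNIV. U $ r $ k * d $ k * U $ m $ k) * x $ m)" for r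
    by (simp add: matrix_matrix_mult_def matrix_vector_mult_def diagm_def transpose_def
        sum_distrib_left sum_distrib_right if_distrib cong: if_cong)
  also have "\<dots> r = (\<Sum>k\<in>UNIV. d $ k * (\<Sum>m\<in>UNIV. U $ m $ k * x $ m) * U $ r $ k)" for r
    by (simp add: sum_distrib_left sum_distrib_right mult_ac) (rule sum.swap)
  finally show ?thesis
    by (simp add: vec_eq_iff column_def inner_vec_def sum_component)
qed

lemma diag_conj_mult_column:
  fixes U :: "real^'n^'n"
  assumes "orthogonal_matrix U"
  shows "(U ** diagm d ** transpose U) *v column j U = d $ j *\<^sub>R column j U"
proof -
  have "(\<Sum>i\<in>UNIV. (d $ i * (column i U \<bullet> column j U)) *\<^sub>R column i U)
      = (\<Sum>i\<in>UNIV. if i = j then d $ j *\<^sub>R column j U else 0)"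
    by (rule sum.cong) (auto simp: orthogonal_matrix_column_inner[OF assms])
  then show ?thesis
    by (simp add: diag_conj_mult_vector)
qed

lemma orthonormal_column_expansion:
  fixes U :: "real^'n^'n"
  assumes "orthogonal_matrix U"
  shows "(\<Sum>i\<in>UNIV. (column i U \<bullet> y) *\<^sub>R column i U) = y"
proof -
  have one: "diagm (\<chi> i. 1) = mat 1"
    by (simp add: diagm_def mat_def vec_eq_iff)
  have "(U ** diagm (\<chi> i. 1) ** transpose U) *v y = y"
    using assms unfolding one by (simp add: orthogonal_matrix_def)
  then show ?thesis
    by (simp add: diag_conj_mult_vector)
qed

lemma parseval_orthogonal_matrix:
  fixes U :: "real^'n^'n"
  assumes "orthogonal_matrix U"
  shows "(\<Sum>i\<in>UNIV. (column i U \<bullet> y)\<^sup>2) = y \<bullet> y"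
proof -
  have "y \<bullet> y = y \<bullet> (\<Sum>i\<in>UNIV. (column i U \<bullet> y) *\<^sub>R column i U)"
    by (simp add: orthonormal_column_expansion[OF assms])
  then show ?thesis
    by (simp add: inner_sum_right power2_eq_square inner_commute)
qed

lemma matrix_eq_on_orthogonal_columns:
  fixes A B U :: "real^'n^'n"
  assumes "orthogonal_matrix U" "\<And>i. A *v column i U = B *v column i U"
  shows "A = B"
proof -
  have "A ** U = B ** U"
    using assms(2) by (simp add: vec_eq_iff matrix_matrix_mult_def matrix_vector_mult_def column_def)
  then have "A ** (U ** transpose U) = B ** (U ** transpose U)"
    by (simp add: matrix_mul_assoc)
  then show ?thesis
    using assms(1) by (simp add: orthogonal_matrix_def)
qed

lemma inner_diag_conj_mult:
  fixes U :: "real^'n^'n"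
  shows "x \<bullet> ((U ** diagm d ** transpose U) *v x) = (\<Sum>i\<in>UNIV. d $ i * (column i U \<bullet> x)\<^sup>2)"
  by (simp add: diag_conj_mult_vector inner_sum_right power2_eq_square inner_commute mult_ac)

lemma transpose_diag_conj: "transpose (U ** diagm d ** transpose U) = U ** diagm d ** transpose U"
proof -
  have "transpose (diagm d) = diagm d"
    by (simp add: diagm_def transpose_def vec_eq_iff)
  then show ?thesis
    by (simp add: matrix_transpose_mul matrix_mul_assoc)
qed

lemma trace_diagm_mult: "trace (diagm d ** C) = (\<Sum>k\<in>UNIV. d $ k * C $ k $ k)"
proof -
  have "(if i = k then d $ i else 0) * C $ k $ i = (if k = i then d $ i * C $ i $ i else 0)" for i k
    by auto
  then show ?thesis
    by (simp add: trace_def matrix_matrix_mult_def diagm_def)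
qed

lemma trace_diag_conj_mult:
  fixes U B :: "real^'n^'n"
  shows "trace ((U ** diagm d ** transpose U) ** B) = (\<Sum>k\<in>UNIV. d $ k * (column k U \<bullet> (B *v column k U)))"
proof -
  have diagonal: "(transpose U ** B ** U) $ k $ k = column k U \<bullet> (B *v column k U)" for k
    by (simp add: matrix_matrix_mult_def matrix_vector_mult_def transpose_def column_def inner_vec_def
        sum_distrib_left sum_distrib_right mult_ac) (subst sum.swap, simp add: mult_ac)
  have "trace ((U ** diagm d ** transpose U) ** B) = trace (U ** (diagm d ** (transpose U ** B)))"
    by (simp add: matrix_mul_assoc)
  also have "\<dots> = trace (diagm d ** (transpose U ** B ** U))"
    by (subst trace_mul_sym) (simp add: matrix_mul_assoc)
  finally show ?thesis
    by (simp add: trace_diagm_mult diagonal)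
qed

lemma trace_diag_conj:
  fixes U :: "real^'n^'n"
  assumes "orthogonal_matrix U"
  shows "trace (U ** diagm d ** transpose U) = (\<Sum>k\<in>UNIV. d $ k)"
  using trace_diag_conj_mult[of U d "mat 1"] by (simp add: orthogonal_matrix_column_inner[OF assms])

lemma symmetric_matrix_inner:
  fixes A :: "real^'n^'n"
  assumes "transpose A = A"
  shows "x \<bullet> (A *v y) = (A *v x) \<bullet> y"
  by (metis assms dot_lmul_matrix transpose_matrix_vector)

lemma linear_coeff_eq_0_if_quadratic_nonpos:
  fixes a b :: real
  assumes "\<And>e. 2 * e * a + e\<^sup>2 * b \<le> 0"
  shows "a = 0"
proof (rule ccontr)
  assume "a \<noteq> 0"
  define B where "B = \<bar>b\<bar> + 1"
  have "0 < B" by (simp add: B_def)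
  have "2 * (a / B) * a + (a / B)\<^sup>2 * b = a\<^sup>2 * (2 * B + b) / B\<^sup>2"
    using \<open>0 < B\<close> by (simp add: field_simps power2_eq_square)
  also have "\<dots> > 0"
    using \<open>a \<noteq> 0\<close> \<open>0 < B\<close> by (intro divide_pos_pos mult_pos_pos) (auto simp: B_def)
  finally show False
    using assms[of "a / B"] by simp
qed

text \<open>A maximiser of the Rayleigh quotient on an \<open>A\<close>-invariant subspace is an eigenvector.\<close>

lemma symmetric_matrix_eigenvector_in_invariant_subspace:
  fixes A :: "real^'n^'n"
  assumes sym: "transpose A = A" and S: "subspace S" "closed S"
    and x: "x \<in> S" "x \<noteq> 0" and invariant: "\<And>x. x \<in> S \<Longrightarrow> A *v x \<in> S"
  obtains u where "u \<in> S" "norm u = 1" "A *v u = (u \<bullet> (A *v u)) *\<^sub>R u"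
proof -
  define K where "K = S \<inter> sphere 0 1"
  have "compact K"
    unfolding K_def using S by (intro closed_Int_compact) auto
  moreover have "x /\<^sub>R norm x \<in> K"
    unfolding K_def using x S(1) by (auto simp: subspace_scale)
  moreover have "continuous_on K (\<lambda>y. y \<bullet> (A *v y))"
    by (intro continuous_intros linear_continuous_on matrix_vector_mul_linear)
  ultimately obtain u where "u \<in> K" and u_max: "\<And>y. y \<in> K \<Longrightarrow> y \<bullet> (A *v y) \<le> u \<bullet> (A *v u)"
    using continuous_attains_sup[of K] by blast
  define l where "l = u \<bullet> (A *v u)"
  have u: "u \<in> S" "norm u = 1" "u \<bullet> u = 1"
    using \<open>u \<in> K\<close> by (auto simp: K_def norm_eq_1)
  have rayleigh: "y \<bullet> (A *v y) \<le> l * (y \<bullet> y)" if "y \<in> S" for y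
  proof (cases "y = 0")
    case False
    have "y /\<^sub>R norm y \<in> K"
      unfolding K_def using that False S(1) by (auto simp: subspace_scale)
    then have "(y \<bullet> (A *v y)) / (y \<bullet> y) \<le> l"
      using u_max[of "y /\<^sub>R norm y"]
      by (simp add: l_def matrix_vector_mult_scaleR power2_norm_eq_inner[symmetric] power2_eq_square field_simps)
    then show ?thesis
      using False by (simp add: field_simps)
  qed simp
  have orthogonal: "v \<bullet> (A *v u - l *\<^sub>R u) = 0" if "v \<in> S" for v
  proof (rule linear_coeff_eq_0_if_quadratic_nonpos)
    fix e :: real
    have "u + e *\<^sub>R v \<in> S"
      using u(1) that S(1) by (simp add: subspace_add subspace_scale)
    moreover have "u \<bullet> (A *v v) = v \<bullet> (A *v u)"
      using symmetric_matrix_inner[OF sym, of u v] by (simp add: inner_commute)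
    ultimately show "2 * e * (v \<bullet> (A *v u - l *\<^sub>R u)) + e\<^sup>2 * (v \<bullet> (A *v v) - l * (v \<bullet> v)) \<le> 0"
      using rayleigh[of "u + e *\<^sub>R v"] u(3)
      by (simp add: l_def matrix_vector_right_distrib matrix_vector_mult_scaleR inner_add_left
          inner_add_right inner_diff_right inner_commute[of u v] power2_eq_square algebra_simps)
  qed
  have "A *v u - l *\<^sub>R u \<in> S"
    using invariant[OF u(1)] u(1) S(1) by (simp add: subspace_diff subspace_scale)
  then have "A *v u = l *\<^sub>R u"
    using orthogonal by fastforce
  then show ?thesis
    using that u by (simp add: l_def)
qed

lemma symmetric_matrix_orthonormal_eigenvectors:
  fixes A :: "real^'n^'n" and I :: "'n set"
  assumes sym: "transpose A = A" and "finite I"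
  shows "\<exists>f l. (\<forall>i\<in>I. \<forall>j\<in>I. f i \<bullet> f j = (if i = j then 1 else 0)) \<and> (\<forall>i\<in>I. A *v f i = l i *\<^sub>R f i)"
  using \<open>finite I\<close>
proof (induction I rule: finite_induct)
  case (insert i I)
  then obtain f l where f_orth: "\<forall>a\<in>I. \<forall>b\<in>I. f a \<bullet> f b = (if a = b then 1 else 0)"
    and f_eig: "\<forall>a\<in>I. A *v f a = l a *\<^sub>R f a"
    by blast
  define S where "S = {x. \<forall>j\<in>I. f j \<bullet> x = 0}"
  have "S = (\<Inter>j\<in>I. {x. f j \<bullet> x = 0})"
    by (auto simp: S_def)
  then have "closed S"
    by (simp add: closed_INT closed_hyperplane)
  have "subspace S"
    by (auto simp: S_def subspace_def inner_add_right)
  have "f j \<bullet> (A *v x) = l j * (f j \<bullet> x)" if "j \<in> I" for j x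
    using symmetric_matrix_inner[OF sym, of "f j" x] f_eig that by simp
  then have invariant: "x \<in> S \<Longrightarrow> A *v x \<in> S" for x
    by (simp add: S_def)
  have "card I < CARD('n)"
    using card_mono[of UNIV "insert i I"] insert(1,2) by simp
  moreover have "dim (f ` I) \<le> card I"
    using insert(1) by (meson card_image_le dim_le_card' finite_imageI order_trans)
  ultimately obtain x where "x \<noteq> 0" and x_orth: "\<And>y. y \<in> span (f ` I) \<Longrightarrow> orthogonal x y"
    using orthogonal_to_subspace_exists[of "f ` I"] by auto
  have "x \<in> S"
    unfolding S_def
  proof (intro CollectI ballI)
    fix j assume "j \<in> I"
    then have "orthogonal x (f j)"
      by (intro x_orth span_base) simp
    then show "f j \<bullet> x = 0"
      by (simp add: orthogonal_def inner_commute)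
  qed
  then obtain u where u: "u \<in> S" "u \<bullet> u = 1" "A *v u = (u \<bullet> (A *v u)) *\<^sub>R u"
    using symmetric_matrix_eigenvector_in_invariant_subspace[OF sym \<open>subspace S\<close> \<open>closed S\<close> _ \<open>x \<noteq> 0\<close> invariant]
    by (metis norm_eq_1)
  have "\<forall>a\<in>insert i I. \<forall>b\<in>insert i I. (f(i := u)) a \<bullet> (f(i := u)) b = (if a = b then 1 else 0)"
    using f_orth u insert(2) by (auto simp: S_def inner_commute)
  moreover have "\<forall>a\<in>insert i I. A *v (f(i := u)) a = (l(i := u \<bullet> (A *v u))) a *\<^sub>R (f(i := u)) a"
    using f_eig u insert(2) by auto
  ultimately show ?case
    by blast
qed simp

lemma symmetric_matrix_diagonalizable:
  fixes A :: "real^'n^'n"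
  assumes "transpose A = A"
  obtains U d where "orthogonal_matrix U" "A = U ** diagm d ** transpose U"
proof -
  obtain f :: "'n \<Rightarrow> real^'n" and l where f_orth: "\<And>i j. f i \<bullet> f j = (if i = j then 1 else 0)"
    and f_eig: "\<And>i. A *v f i = l i *\<^sub>R f i"
    using symmetric_matrix_orthonormal_eigenvectors[OF assms finite_class.finite_UNIV] by blast
  define U :: "real^'n^'n" where "U = (\<chi> r c. f c $ r)"
  have column_U: "column c U = f c" for c
    by (simp add: U_def column_def vec_eq_iff)
  have U: "orthogonal_matrix U"
    unfolding orthogonal_matrix matrix_mult_transpose_dot_column column_U f_orth
    by (simp add: vec_eq_iff mat_def)
  have "A = U ** diagm (\<chi> i. l i) ** transpose U"
    using diag_conj_mult_column[OF U] f_eig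
    by (intro matrix_eq_on_orthogonal_columns[OF U]) (simp add: column_U)
  with U show ?thesis
    by (rule that)
qed

lemma transpose_diff: "transpose (A - B) = transpose A - (transpose B :: 'a::ab_group_add^'n^'m)"
  by (simp add: transpose_def vec_eq_iff)

lemma diag_conj_fun_eigenvector:
  fixes U :: "real^'n^'n"
  assumes U: "orthogonal_matrix U" and v: "(U ** diagm d ** transpose U) *v v = l *\<^sub>R v"
  shows "(U ** diagm (\<chi> i. f (d $ i)) ** transpose U) *v v = f l *\<^sub>R v"
proof -
  have "d $ i * (column i U \<bullet> v) = l * (column i U \<bullet> v)" for i
    using arg_cong[OF v, of "inner (column i U)"] by (simp add: diag_conj_mult_vector inner_column_sum[OF U])
  then have coeff: "f (d $ i) * (column i U \<bullet> v) = f l * (column i U \<bullet> v)" for i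
    by (cases "column i U \<bullet> v = 0") auto
  have "(U ** diagm (\<chi> i. f (d $ i)) ** transpose U) *v v = f l *\<^sub>R (\<Sum>i\<in>UNIV. (column i U \<bullet> v) *\<^sub>R column i U)"
    unfolding diag_conj_mult_vector scaleR_sum_right by (simp only: vec_lambda_beta coeff scaleR_scaleR)
  then show ?thesis
    by (simp add: orthonormal_column_expansion[OF U])
qed

text \<open>Since \<open>f\<close> acts on each eigenspace of \<open>A\<close> as a scalar, \<open>matfun f A\<close> does not depend on
  the diagonalisation chosen by \<open>SOME\<close>.\<close>

lemma matfun_diag_conj:
  fixes U :: "real^'n^'n"
  assumes U: "orthogonal_matrix U"
  shows "matfun f (U ** diagm d ** transpose U) = U ** diagm (\<chi> i. f (d $ i)) ** transpose U"
proof -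
  define A where "A = U ** diagm d ** transpose U"
  let ?diagonalises = "\<lambda>B. \<exists>U d. orthogonal_matrix U \<and> A = U ** diagm d ** transpose U
      \<and> B = U ** diagm (\<chi> i. f (d $ i)) ** transpose U"
  have "?diagonalises (matfun f A)"
    unfolding matfun_def by (rule someI_ex) (use U A_def in blast)
  then obtain U' d' where U': "orthogonal_matrix U'" and A': "A = U' ** diagm d' ** transpose U'"
    and matfun_A: "matfun f A = U' ** diagm (\<chi> i. f (d' $ i)) ** transpose U'"
    by blast
  show ?thesis
    unfolding A_def[symmetric]
  proof (rule matrix_eq_on_orthogonal_columns[OF U])
    fix i
    have "(U' ** diagm d' ** transpose U') *v column i U = d $ i *\<^sub>R column i U"
      unfolding A'[symmetric] A_def by (rule diag_conj_mult_column[OF U])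
    then have "matfun f A *v column i U = f (d $ i) *\<^sub>R column i U"
      unfolding matfun_A by (rule diag_conj_fun_eigenvector[OF U'])
    then show "matfun f A *v column i U = (U ** diagm (\<chi> i. f (d $ i)) ** transpose U) *v column i U"
      by (simp add: diag_conj_mult_column[OF U])
  qed
qed

section \<open>The free energy gap\<close>

lemma psd_diag_conj:
  fixes U :: "real^'n^'n"
  assumes "\<And>i. 0 \<le> d $ i"
  shows "psd (U ** diagm d ** transpose U)"
  unfolding psd_def inner_diag_conj_mult using assms by (auto intro!: sum_nonneg)

lemma psd_one_minus_diag_conj:
  fixes U :: "real^'n^'n"
  assumes U: "orthogonal_matrix U" and "\<And>i. d $ i \<le> 1"
  shows "psd (mat 1 - U ** diagm d ** transpose U)"
  unfolding psd_def
proof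
  fix x :: "real^'n"
  have "x \<bullet> ((mat 1 - U ** diagm d ** transpose U) *v x) = (\<Sum>i\<in>UNIV. (1 - d $ i) * (column i U \<bullet> x)\<^sup>2)"
    by (simp add: matrix_vector_mult_diff_rdistrib inner_diff_right inner_diag_conj_mult
        parseval_orthogonal_matrix[OF U, symmetric] sum_subtractf algebra_simps)
  also have "\<dots> \<ge> 0"
    using assms by (auto intro!: sum_nonneg)
  finally show "0 \<le> x \<bullet> ((mat 1 - U ** diagm d ** transpose U) *v x)" .
qed

lemma feasible_diag_conj:
  fixes U :: "real^'n^'n"
  assumes "orthogonal_matrix U" "\<And>i. 0 \<le> p $ i \<and> p $ i \<le> 1" "(\<Sum>i\<in>UNIV. p $ i) = real N"
  shows "feasible N (U ** diagm p ** transpose U)"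
  using assms by (simp add: feasible_def trace_diag_conj transpose_diag_conj psd_diag_conj psd_one_minus_diag_conj)

lemma feasible_diag_conjE:
  fixes P :: "real^'n^'n"
  assumes "feasible N P"
  obtains V q where "orthogonal_matrix V" "P = V ** diagm q ** transpose V"
    "\<And>j. 0 \<le> q $ j \<and> q $ j \<le> 1" "(\<Sum>j\<in>UNIV. q $ j) = real N"
proof -
  have P: "transpose P = P" "trace P = real N" "psd P" "psd (mat 1 - P)"
    using assms by (auto simp: feasible_def)
  obtain V q where V: "orthogonal_matrix V" and P_eq: "P = V ** diagm q ** transpose V"
    using symmetric_matrix_diagonalizable[OF P(1)] by blast
  have "P *v column j V = q $ j *\<^sub>R column j V" "column j V \<bullet> column j V = 1" for j
    using diag_conj_mult_column[OF V] orthogonal_matrix_column_inner[OF V] by (simp_all add: P_eq)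
  moreover have "0 \<le> column j V \<bullet> (P *v column j V)" "0 \<le> column j V \<bullet> ((mat 1 - P) *v column j V)" for j
    using P(3,4) by (simp_all add: psd_def)
  ultimately have "0 \<le> q $ j \<and> q $ j \<le> 1" for j
    by (simp add: matrix_vector_mult_diff_rdistrib inner_diff_right)
  moreover have "(\<Sum>j\<in>UNIV. q $ j) = real N"
    using P(2) by (simp add: P_eq trace_diag_conj[OF V])
  ultimately show ?thesis
    using that V P_eq by blast
qed

lemma trace_diag_conj_mult_square:
  fixes U X :: "real^'n^'n"
  assumes "transpose X = X"
  shows "trace ((U ** diagm w ** transpose U) ** (X ** X))
       = (\<Sum>k\<in>UNIV. w $ k * ((X *v column k U) \<bullet> (X *v column k U)))"
  by (simp add: trace_diag_conj_mult matrix_vector_mul_assoc[symmetric] symmetric_matrix_inner[OF assms])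

lemma diag_conj_trace_mult_square_nonpos_imp_zero:
  fixes U X :: "real^'n^'n"
  assumes U: "orthogonal_matrix U" and w: "\<And>k. 0 < w $ k" and X: "transpose X = X"
    and nonpos: "trace ((U ** diagm w ** transpose U) ** (X ** X)) \<le> 0"
  shows "X = 0"
proof (rule matrix_eq_on_orthogonal_columns[OF U])
  fix k
  have "(\<Sum>k\<in>UNIV. w $ k * ((X *v column k U) \<bullet> (X *v column k U))) = 0"
    using nonpos w by (intro antisym sum_nonneg)
      (auto simp: trace_diag_conj_mult_square[OF X] less_imp_le)
  then have "w $ k * ((X *v column k U) \<bullet> (X *v column k U)) = 0"
    using w by (subst (asm) sum_nonneg_eq_0_iff) (auto simp: less_imp_le)
  then show "X *v column k U = 0 *v column k U"
    using w[of k] by simp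
qed

lemma doubly_stochastic_sum:
  fixes c :: "'a::finite \<Rightarrow> 'b::finite \<Rightarrow> real"
  assumes "\<And>i. (\<Sum>j\<in>UNIV. c i j) = 1" "\<And>j. (\<Sum>i\<in>UNIV. c i j) = 1"
  shows "(\<Sum>i\<in>UNIV. \<Sum>j\<in>UNIV. c i j * (a i + b j)) = (\<Sum>i\<in>UNIV. a i) + (\<Sum>j\<in>UNIV. b j)"
proof -
  have "(\<Sum>i\<in>UNIV. \<Sum>j\<in>UNIV. c i j * a i) = (\<Sum>i\<in>UNIV. a i)"
    using assms(1) by (simp add: sum_distrib_right[symmetric])
  moreover have "(\<Sum>i\<in>UNIV. \<Sum>j\<in>UNIV. c i j * b j) = (\<Sum>j\<in>UNIV. b j)"
    using assms(2) by (subst sum.swap) (simp add: sum_distrib_right[symmetric])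
  ultimately show ?thesis
    by (simp add: distrib_left sum.distrib)
qed

lemma trace_diag_conj_mult_diag_conj:
  fixes U V :: "real^'n^'n"
  shows "trace ((U ** diagm a ** transpose U) ** (V ** diagm b ** transpose V))
       = (\<Sum>i\<in>UNIV. \<Sum>j\<in>UNIV. (column j V \<bullet> column i U)\<^sup>2 * (a $ i * b $ j))"
  by (simp add: trace_diag_conj_mult inner_diag_conj_mult inner_commute sum_distrib_left mult_ac)

lemma trace_diag_conj_mult_square_diff:
  fixes U V :: "real^'n^'n" and p q w :: "real^'n"
  assumes U: "orthogonal_matrix U" and V: "orthogonal_matrix V"
  defines "X \<equiv> V ** diagm q ** transpose V - U ** diagm p ** transpose U"
  shows "trace ((U ** diagm w ** transpose U) ** (X ** X))
       = (\<Sum>i\<in>UNIV. \<Sum>j\<in>UNIV. (column j V \<bullet> column i U)\<^sup>2 * (w $ i * (q $ j - p $ i)\<^sup>2))"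
proof -
  have "transpose X = X"
    by (simp add: X_def transpose_diff transpose_diag_conj)
  moreover have "column j V \<bullet> (X *v column i U) = (q $ j - p $ i) * (column j V \<bullet> column i U)" for i j
    using symmetric_matrix_inner[of "V ** diagm q ** transpose V" "column j V" "column i U", OF transpose_diag_conj]
    by (simp add: X_def diag_conj_mult_column[OF U] diag_conj_mult_column[OF V]
        matrix_vector_mult_diff_rdistrib inner_diff_right algebra_simps)
  then have "(X *v column i U) \<bullet> (X *v column i U)
      = (\<Sum>j\<in>UNIV. (column j V \<bullet> column i U)\<^sup>2 * (q $ j - p $ i)\<^sup>2)" for i
    using parseval_orthogonal_matrix[OF V, of "X *v column i U"] by (simp add: power_mult_distrib mult_ac)
  ultimately show ?thesis
    by (simp add: trace_diag_conj_mult_square sum_distrib_left mult_ac)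
qed

lemma free_energy_gap_ge_weighted_distance:
  fixes U P :: "real^'n^'n" and d :: "real^'n" and \<beta> \<mu> :: real
  assumes \<beta>: "0 < \<beta>" and U: "orthogonal_matrix U" and P: "feasible N P"
    and filling: "(\<Sum>i\<in>UNIV. fermi \<beta> \<mu> (d $ i)) = real N"
  defines "H \<equiv> U ** diagm d ** transpose U"
    and "p \<equiv> \<chi> i. fermi \<beta> \<mu> (d $ i)"
    and "w \<equiv> \<chi> i. max (1 / \<beta>) \<bar>d $ i - \<mu>\<bar>"
  defines "F \<equiv> U ** diagm p ** transpose U"
    and "W \<equiv> U ** diagm w ** transpose U"
  shows "trace (W ** ((P - F) ** (P - F))) \<le> energy \<beta> H P - energy \<beta> H F"
proof -
  obtain V q where V: "orthogonal_matrix V" and P_eq: "P = V ** diagm q ** transpose V"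
    and q: "\<And>j. 0 \<le> q $ j \<and> q $ j \<le> 1" and sum_q: "(\<Sum>j\<in>UNIV. q $ j) = real N"
    using feasible_diag_conjE[OF P] by blast
  define c where "c i j = (column j V \<bullet> column i U)\<^sup>2" for i j
  have row_sum: "(\<Sum>j\<in>UNIV. c i j) = 1" for i
    using parseval_orthogonal_matrix[OF V, of "column i U"] orthogonal_matrix_column_inner[OF U]
    by (simp add: c_def)
  have column_sum: "(\<Sum>i\<in>UNIV. c i j) = 1" for j
    using parseval_orthogonal_matrix[OF U, of "column j V"] orthogonal_matrix_column_inner[OF V]
    by (simp add: c_def inner_commute)
  have trace_HF: "trace (H ** F) = (\<Sum>i\<in>UNIV. d $ i * p $ i)"
    by (simp add: H_def F_def trace_diag_conj_mult diag_conj_mult_column[OF U]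
        orthogonal_matrix_column_inner[OF U])
  have trace_ent: "trace (matfun ent P) = (\<Sum>j\<in>UNIV. ent (q $ j))"
    "trace (matfun ent F) = (\<Sum>i\<in>UNIV. ent (p $ i))"
    by (simp_all add: P_eq F_def matfun_diag_conj[OF V] matfun_diag_conj[OF U]
        trace_diag_conj[OF V] trace_diag_conj[OF U])
  define gap where "gap i j = (d $ i - \<mu>) * (q $ j - p $ i) + (1 / \<beta>) * (ent (q $ j) - ent (p $ i))
      - w $ i * (q $ j - p $ i)\<^sup>2" for i j
  have gap_nonneg: "0 \<le> gap i j" for i j
    using fermi_free_energy_gap_ge[OF \<beta>, of "q $ j" "d $ i" \<mu>] q[of j] by (simp add: gap_def p_def w_def)
  have "c i j * gap i j = c i j * (d $ i * q $ j) - c i j * (w $ i * (q $ j - p $ i)\<^sup>2)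
      + c i j * (((\<mu> - d $ i) * p $ i - (1 / \<beta>) * ent (p $ i)) + ((1 / \<beta>) * ent (q $ j) - \<mu> * q $ j))" for i j
    by (simp add: gap_def algebra_simps)
  then have "(\<Sum>i\<in>UNIV. \<Sum>j\<in>UNIV. c i j * gap i j) = trace (H ** P) - trace (W ** ((P - F) ** (P - F)))
      + (\<Sum>i\<in>UNIV. (\<mu> - d $ i) * p $ i - (1 / \<beta>) * ent (p $ i))
      + (\<Sum>j\<in>UNIV. (1 / \<beta>) * ent (q $ j) - \<mu> * q $ j)"
    by (simp add: H_def W_def F_def P_eq c_def trace_diag_conj_mult_diag_conj
        trace_diag_conj_mult_square_diff[OF U V] sum_subtractf sum.distrib
        doubly_stochastic_sum[OF row_sum column_sum, unfolded c_def])
  also have "\<dots> = energy \<beta> H P - energy \<beta> H F - trace (W ** ((P - F) ** (P - F)))"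
    using filling sum_q
    by (simp add: energy_def trace_HF trace_ent p_def sum_subtractf sum.distrib sum_distrib_left
        left_diff_distrib algebra_simps) (simp add: sum_distrib_left[symmetric])
  finally have "energy \<beta> H P - energy \<beta> H F - trace (W ** ((P - F) ** (P - F)))
      = (\<Sum>i\<in>UNIV. \<Sum>j\<in>UNIV. c i j * gap i j)" ..
  moreover have "0 \<le> (\<Sum>i\<in>UNIV. \<Sum>j\<in>UNIV. c i j * gap i j)"
    by (intro sum_nonneg mult_nonneg_nonneg) (simp_all add: c_def gap_nonneg)
  ultimately show ?thesis
    by linarith
qed

lemma fermi_bounds: "0 \<le> fermi \<beta> \<mu> x \<and> fermi \<beta> \<mu> x \<le> 1"
proof -
  define e where "e = 1 + exp (\<beta> * (x - \<mu>))"
  have "1 \<le> e"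
    by (simp add: e_def)
  then show ?thesis
    by (simp add: fermi_def e_def[symmetric])
qed

theorem theorem2:
  fixes H Pinf Peta :: "real^'n^'n" and N :: nat and \<beta> \<eta> \<mu> :: real
  assumes Hsym: "transpose H = H"
    and Npos: "0 < N"
    and beta: "0 < \<beta>" and eta: "0 < \<eta>"
    and mu: "trace (matfun (fermi \<beta> \<mu>) H) = real N"
    and Pinf: "is_minimizer (energy \<beta> H) N Pinf"
    and Peta: "is_minimizer (\<lambda>P. energy \<beta> H P + (1 / \<eta>) * l1norm P) N Peta"
  shows "0 \<le> energy \<beta> H Peta - energy \<beta> H Pinf
       \<and> energy \<beta> H Peta - energy \<beta> H Pinf \<le> (1 / \<eta>) * l1norm Pinf
       \<and> trace (matfun (\<lambda>x. max (1 / \<beta>) \<bar>x - \<mu>\<bar>) H ** ((Peta - Pinf) ** (Peta - Pinf)))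
           \<le> (1 / \<eta>) * l1norm Pinf"
proof -
  obtain U d where U: "orthogonal_matrix U" and H: "H = U ** diagm d ** transpose U"
    using symmetric_matrix_diagonalizable[OF Hsym] by blast
  define F where "F = U ** diagm (\<chi> i. fermi \<beta> \<mu> (d $ i)) ** transpose U"
  define W where "W = U ** diagm (\<chi> i. max (1 / \<beta>) \<bar>d $ i - \<mu>\<bar>) ** transpose U"
  have filling: "(\<Sum>i\<in>UNIV. fermi \<beta> \<mu> (d $ i)) = real N"
    using mu by (simp add: H matfun_diag_conj[OF U] trace_diag_conj[OF U])
  have F: "feasible N F"
    unfolding F_def using U fermi_bounds filling by (intro feasible_diag_conj) auto
  have gap: "trace (W ** ((P - F) ** (P - F))) \<le> energy \<beta> H P - energy \<beta> H F" if "feasible N P" for P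
    using free_energy_gap_ge_weighted_distance[OF beta U that filling] by (simp add: H F_def W_def)
  have "trace (W ** ((Pinf - F) ** (Pinf - F))) \<le> 0"
    using gap[of Pinf] Pinf F by (auto simp: is_minimizer_def)
  then have "Pinf - F = 0"
    unfolding W_def using beta Pinf
    by (intro diag_conj_trace_mult_square_nonpos_imp_zero[OF U])
      (auto simp: less_max_iff_disj is_minimizer_def feasible_def transpose_diff F_def transpose_diag_conj)
  then have "Pinf = F"
    by simp
  moreover have "energy \<beta> H Peta + (1 / \<eta>) * l1norm Peta \<le> energy \<beta> H F + (1 / \<eta>) * l1norm F"
    "energy \<beta> H Pinf \<le> energy \<beta> H Peta"
    using Pinf Peta F by (auto simp: is_minimizer_def)
  moreover have "0 \<le> (1 / \<eta>) * l1norm Peta"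
    using eta by (simp add: l1norm_def sum_nonneg)
  ultimately show ?thesis
    using gap[of Peta] Peta by (auto simp: W_def H matfun_diag_conj[OF U] is_minimizer_def)
qed

end
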